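(* Let $f$ be a transcendental entire function on $\mathbb{C}$ and let $P,Q$ be polynomials such that $P-Q$ is non-constant. Then $f+P$ and $f+Q$ are algebraically independent over $\mathbb{C}$. *)

theory Defs
  imports "HOL-Complex_Analysis.Complex_Analysis" "HOL-Computational_Algebra.Polynomial"
begin

text \<open>Bivariate polynomials over C are represented as complex poly poly
  (polynomials in a second variable Y with coefficients in C[X]).
  eval2 R a b evaluates R at X = a, Y = b.\<close>
definition eval2 :: "complex poly poly \<Rightarrow> complex \<Rightarrow> complex \<Rightarrow> complex" where
  "eval2 R a b = poly (poly R [:b:]) a"

definition transcendental_entire :: "(complex \<Rightarrow> complex) \<Rightarrow> bool" where
  "transcendental_entire f \<longleftrightarrow> f holomorphic_on UNIV \<and> \<not> (\<exists>p. \<forall>z. f z = poly p z)"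

definition alg_independent :: "(complex \<Rightarrow> complex) \<Rightarrow> (complex \<Rightarrow> complex) \<Rightarrow> bool" where
  "alg_independent g h \<longleftrightarrow> (\<forall>R. R \<noteq> 0 \<longrightarrow> \<not> (\<forall>z. eval2 R (g z) (h z) = 0))"

end

theory Submission
  imports Defs "HOL-Computational_Algebra.Fundamental_Theorem_Algebra"
begin

text \<open>If R(f + P, f + Q) = 0, then u = f + P satisfies S(z, u(z)) = 0 for
  S(X, Y) = R(Y, Y + (Q - P)(X)), and S \<noteq> 0 because the nonconstant polynomial
  Q - P takes every value. Thus the entire function u is a root of a nonzero polynomial
  over \<complex>[z]; Cauchy's bound on the roots gives u polynomial growth, so by Liouville
  u, and with it f, is a polynomial.\<close>

lemma eval2_eq_sum: "eval2 S z u = (\<Sum>k\<le>degree S. poly (coeff S k) z * u ^ k)"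
  by (simp add: eval2_def poly_altdef[of S] poly_sum)

lemma coeff_poly_const_poly:
  "coeff (poly (R :: 'a::comm_semiring_1 poly poly) [:b:]) k = poly (map_poly (\<lambda>p. coeff p k) R) b"
  by (induction R) (auto simp: map_poly_pCons)

lemma eval2_eq_0_imp_eq_0:
  assumes "\<And>a b. eval2 R a b = 0"
  shows "R = 0"
proof -
  have "poly R [:b:] = 0" for b
    using assms poly_all_0_iff_0 unfolding eval2_def by blast
  then have "map_poly (\<lambda>p. coeff p k) R = 0" for k
    by (metis coeff_poly_const_poly coeff_0 poly_all_0_iff_0)
  then have "coeff (coeff R j) k = 0" for j k
    by (metis coeff_map_poly zero_poly.rep_eq)
  then show ?thesis
    by (metis leading_coeff_0_iff)
qed

lemma poly_surjective:
  fixes D :: "complex poly"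
  assumes "degree D > 0"
  shows "\<exists>z. poly D z = w"
proof -
  have "degree (D - [:w:]) = degree D"
    using assms by (simp add: diff_conv_add_uminus degree_add_eq_left)
  then have "\<not> (\<exists>c l. c \<noteq> 0 \<and> l = 0 \<and> D - [:w:] = pCons c l)"
    using assms by auto
  then obtain z where "poly (D - [:w:]) z = 0"
    using fundamental_theorem_of_algebra_alt by blast
  then show ?thesis
    by auto
qed

definition shear :: "complex poly poly \<Rightarrow> complex poly \<Rightarrow> complex poly poly" where
  "shear R D = poly (map_poly (map_poly (\<lambda>c. [:c:])) R) [:D, 1:]"

lemma poly_map_const_poly:
  "poly (map_poly (\<lambda>c. [:c:]) (p :: 'a::comm_semiring_1 poly)) [:u:] = [:poly p u:]"
  by (induction p) (auto simp: map_poly_pCons mult.commute)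

lemma eval2_shear: "eval2 (shear R D) z u = eval2 R u (u + poly D z)"
proof (induction R)
  case 0
  then show ?case by (simp add: shear_def eval2_def)
next
  case (pCons c R)
  have "map_poly (\<lambda>c::complex. [:c:]) 0 = 0" by simp
  with pCons show ?case
    by (simp add: shear_def eval2_def map_poly_pCons[of "map_poly (\<lambda>c. [:c:])"]
        poly_map_const_poly algebra_simps)
qed

lemma shear_nonzero:
  assumes "R \<noteq> 0" and "degree D > 0"
  shows "shear R D \<noteq> 0"
proof
  assume shear0: "shear R D = 0"
  have "eval2 R a b = 0" for a b
  proof -
    obtain z where "poly D z = b - a"
      using poly_surjective[OF assms(2)] by blast
    then have "eval2 R a b = eval2 (shear R D) z a"
      by (simp add: eval2_shear)
    then show ?thesis
      using shear0 by (simp add: eval2_def)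
  qed
  then show False
    using assms(1) eval2_eq_0_imp_eq_0 by blast
qed

lemma norm_root_le_Cauchy_bound:
  fixes a :: "nat \<Rightarrow> 'a::real_normed_field"
  assumes root: "(\<Sum>k\<le>n. a k * w ^ k) = 0" and lead: "a n \<noteq> 0"
  shows "norm w \<le> 1 + (\<Sum>k<n. norm (a k)) / norm (a n)"
proof (cases "norm w \<le> 1")
  case True
  then show ?thesis
    by (smt (verit) divide_nonneg_nonneg norm_ge_zero sum_nonneg)
next
  case False
  obtain m where m: "n = Suc m"
    using root lead by (cases n) auto
  have "a n * w ^ n = - (\<Sum>k<n. a k * w ^ k)"
    using root by (simp add: m add_eq_0_iff2 atMost_Suc lessThan_Suc_atMost[symmetric])
  then have "norm (a n) * norm w ^ n = norm (\<Sum>k<n. a k * w ^ k)"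
    by (metis norm_minus_cancel norm_mult norm_power)
  also have "\<dots> \<le> (\<Sum>k<n. norm (a k) * norm w ^ k)"
    by (rule order_trans[OF norm_sum]) (simp add: norm_mult norm_power)
  also have "\<dots> \<le> (\<Sum>k<n. norm (a k) * norm w ^ m)"
    using False m by (intro sum_mono mult_left_mono power_increasing) auto
  also have "\<dots> = (\<Sum>k<n. norm (a k)) * norm w ^ m"
    by (simp add: sum_distrib_right)
  finally have "norm (a n) * norm w * norm w ^ m \<le> (\<Sum>k<n. norm (a k)) * norm w ^ m"
    by (simp add: m mult.assoc)
  then have "norm (a n) * norm w \<le> (\<Sum>k<n. norm (a k))"
    using False by (smt (verit) mult_le_cancel_right norm_ge_zero zero_less_power)
  then have "norm w \<le> (\<Sum>k<n. norm (a k)) / norm (a n)"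
    using lead by (simp add: field_simps)
  then show ?thesis
    by linarith
qed

lemma norm_poly_le_power:
  fixes p :: "'a::real_normed_field poly"
  assumes "1 \<le> norm z" and "degree p \<le> N"
  shows "norm (poly p z) \<le> (\<Sum>i\<le>degree p. norm (coeff p i)) * norm z ^ N"
proof -
  have "norm (poly p z) \<le> (\<Sum>i\<le>degree p. norm (coeff p i) * norm z ^ i)"
    unfolding poly_altdef by (rule order_trans[OF norm_sum]) (simp add: norm_mult norm_power)
  also have "\<dots> \<le> (\<Sum>i\<le>degree p. norm (coeff p i) * norm z ^ N)"
    using assms by (intro sum_mono mult_left_mono power_increasing) auto
  finally show ?thesis
    by (simp add: sum_distrib_right)
qed

lemma poly_bounded_below_at_infinity:
  fixes q :: "'a::{comm_semiring_0,real_normed_div_algebra} poly"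
  assumes "q \<noteq> 0"
  obtains c r where "c > 0" and "\<And>z. r \<le> norm z \<Longrightarrow> c \<le> norm (poly q z)"
proof (cases "degree q = 0")
  case True
  then obtain a where "q = [:a:]"
    by (metis degree_eq_zeroE)
  with assms that[of "norm a"] show ?thesis
    by auto
next
  case False
  obtain a p where q: "q = pCons a p"
    by (cases q) auto
  with False have "p \<noteq> 0"
    by auto
  from poly_infinity[OF this, of 1 a] that[of 1] show ?thesis
    unfolding q by auto
qed

lemma algebraic_function_polynomial_growth:
  assumes "S \<noteq> 0" and root: "\<And>z. eval2 S z (g z) = 0"
  obtains A B M where "\<And>z. A \<le> norm z \<Longrightarrow> norm (g z) \<le> B * norm z ^ M"
proof -
  define n where "n = degree S"
  define a where "a k = coeff S k" for k
  have "a n \<noteq> 0"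
    using assms(1) unfolding a_def n_def by simp
  then obtain c r where c: "c > 0" and lead: "\<And>z. r \<le> norm z \<Longrightarrow> c \<le> norm (poly (a n) z)"
    using poly_bounded_below_at_infinity by blast
  define M where "M = (\<Sum>k<n. degree (a k))"
  define C where "C k = (\<Sum>i\<le>degree (a k). norm (coeff (a k) i))" for k
  have "norm (g z) \<le> (1 + (\<Sum>k<n. C k) / c) * norm z ^ M" if z: "max 1 r \<le> norm z" for z
  proof -
    have lead_z: "c \<le> norm (poly (a n) z)"
      using lead z by simp
    have "(\<Sum>k\<le>n. poly (a k) z * g z ^ k) = 0"
      using root[of z] unfolding eval2_eq_sum a_def n_def .
    then have "norm (g z) \<le> 1 + (\<Sum>k<n. norm (poly (a k) z)) / norm (poly (a n) z)"
      using lead_z c by (intro norm_root_le_Cauchy_bound) auto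
    also have "\<dots> \<le> 1 + (\<Sum>k<n. norm (poly (a k) z)) / c"
      using lead_z c by (intro add_left_mono divide_left_mono) (auto simp: sum_nonneg intro!: mult_pos_pos)
    also have "\<dots> \<le> 1 + (\<Sum>k<n. C k * norm z ^ M) / c"
      unfolding C_def M_def using z c
      by (intro add_left_mono divide_right_mono sum_mono norm_poly_le_power)
        (auto intro: member_le_sum)
    also have "\<dots> \<le> (1 + (\<Sum>k<n. C k) / c) * norm z ^ M"
      using z by (simp add: distrib_right sum_distrib_right[symmetric])
    finally show ?thesis .
  qed
  then show ?thesis
    using that by blast
qed

lemma entire_algebraic_function_is_polynomial:
  assumes "g holomorphic_on UNIV" and "S \<noteq> 0" and "\<And>z. eval2 S z (g z) = 0"
  shows "\<exists>p. \<forall>z. g z = poly p z"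
proof -
  obtain A B M where growth: "\<And>z. A \<le> norm z \<Longrightarrow> norm (g z) \<le> B * norm z ^ M"
    using algebraic_function_polynomial_growth[OF assms(2,3)] by blast
  have "g z = poly (\<Sum>k\<le>M. monom ((deriv ^^ k) g 0 / fact k) k) z" for z
  proof -
    have "g z = (\<Sum>k\<le>M. (deriv ^^ k) g 0 / fact k * z ^ k)"
      using assms(1) growth by (rule Liouville_polynomial)
    then show ?thesis
      by (simp add: poly_sum poly_monom)
  qed
  then show ?thesis
    by blast
qed

theorem mainTheorem10:
  fixes f :: "complex \<Rightarrow> complex" and P Q :: "complex poly"
  assumes "transcendental_entire f"
    and "degree (P - Q) > 0"
  shows "alg_independent (\<lambda>z. f z + poly P z) (\<lambda>z. f z + poly Q z)"
  unfolding alg_independent_def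
proof (intro allI impI notI)
  fix R :: "complex poly poly"
  assume "R \<noteq> 0" and relation: "\<forall>z. eval2 R (f z + poly P z) (f z + poly Q z) = 0"
  define g where "g z = f z + poly P z" for z
  have "g holomorphic_on UNIV"
    using assms(1) unfolding g_def transcendental_entire_def by (auto intro!: holomorphic_intros)
  moreover have "shear R (Q - P) \<noteq> 0"
    using \<open>R \<noteq> 0\<close> assms(2) by (metis shear_nonzero degree_minus minus_diff_eq)
  moreover have "eval2 (shear R (Q - P)) z (g z) = 0" for z
    using relation by (simp add: eval2_shear g_def algebra_simps)
  ultimately obtain p where "\<And>z. g z = poly p z"
    using entire_algebraic_function_is_polynomial by blast
  then have "f z = poly (p - P) z" for z
    by (simp add: g_def algebra_simps)
  with assms(1) show False
    unfolding transcendental_entire_def by blast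
qed

end
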